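(* Let $n\ge1$ and $w=\sqrt{(1-x)/(1+x)}$. Then \[R_n^{B,>}(x)=\frac{x}{2}\Big(\frac{1+x}{2}\Big)^{n-1}(1+w)^n\,B_n\!\Big(\frac{1-w}{1+w}\Big).\]
   Context: $\mathfrak B_n$ is the set of signed permutations $\pi=\pi_1\cdots\pi_n$ (words over $\{\pm1,\dots,\pm n\}$ with $|\pi_1|,\dots,|\pi_n|$ a permutation of $[n]$), compared as integers; set $\pi_0=0$. $\mathrm{run}_B(\pi)$ is $1$ plus the number of $i\in\{1,\dots,n-1\}$ with $\pi_{i-1}<\pi_i>\pi_{i+1}$ or $\pi_{i-1}>\pi_i<\pi_{i+1}$, and $R_n^{B,>}(x)=\sum_{\pi\in\mathfrak B_n,\ \pi_1>0}x^{\mathrm{run}_B(\pi)}$. $\mathrm{des}_B(\pi)=\#\{i\in\{0,\dots,n-1\}:\pi_i>\pi_{i+1}\}$ and $B_n(t)=\sum_{\pi\in\mathfrak B_n}t^{\mathrm{des}_B(\pi)}$ is the type B Eulerian polynomial. (The right-hand side, expanded, is a polynomial in $x$; the identity is one of rational functions in $x$ and $w$ with $w^2=(1-x)/(1+x)$.) *)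

theory Defs
  imports Complex_Main
begin

definition signed_perms :: "nat \<Rightarrow> int list set" where
  "signed_perms n = {ps. length ps = n \<and> distinct (map abs ps) \<and> set (map abs ps) = {1..int n}}"

text \<open>With pi_0 = 0, the word 0 # ps has pi_i at index i.\<close>
definition runB :: "int list \<Rightarrow> nat" where
  "runB ps = (let p = 0 # ps; n = length ps in
     1 + card {i \<in> {1..n-1}. (p!(i-1) < p!i \<and> p!i > p!(i+1)) \<or> (p!(i-1) > p!i \<and> p!i < p!(i+1))})"

definition desB :: "int list \<Rightarrow> nat" where
  "desB ps = (let p = 0 # ps; n = length ps in card {i \<in> {0..n-1}. p!i > p!(i+1)})"

definition R_B_pos :: "nat \<Rightarrow> 'a::comm_semiring_1 \<Rightarrow> 'a" where
  "R_B_pos n x = (\<Sum>ps\<in>{ps \<in> signed_perms n. ps!0 > 0}. x ^ runB ps)"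

definition eulerB :: "nat \<Rightarrow> 'a::comm_semiring_1 \<Rightarrow> 'a" where
  "eulerB n t = (\<Sum>ps\<in>signed_perms n. t ^ desB ps)"

end

theory Submission
  imports Defs "HOL-Analysis.Derivative"
begin

text \<open>
Both sides are sums over signed permutations of weights that depend only on the descent word
e of pi (e_i records whether pi_i > pi_(i+1), with pi_0 = 0): run_B pi is one more than the
number of letter changes in e, des_B pi is the number of descents in e, and negating all letters
shows that the permutations with pi_1 > 0 carry half of the total run weight.
Inserting +-(n+1) into the n+1 slots of a signed permutation of [n] turns one letter of e into a
peak or a valley, or appends a letter. Counting how this changes the statistics shows that
  P_n(w) = sum over pi of (1 - w^2)^run_B(pi) (1 + w^2)^(n - run_B(pi))  and
  Q_n(w) = sum over pi of (1 - w^2) (1 - w)^des_B(pi) (1 + w)^(n - des_B(pi))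
satisfy the same recurrence F_(n+1) = ((2n + 3)(1 - w^2) - (1 + w^2)) F_n - 2w (1 - w^2) F_n'.
As P_1 = Q_1, P_n = Q_n for all n, and substituting x = (1 - w^2)/(1 + w^2) gives the theorem.
\<close>

section \<open>Letter changes in boolean words\<close>

fun changes :: "bool list \<Rightarrow> nat" where
  "changes (a # b # xs) = (if a = b then 0 else 1) + changes (b # xs)"
| "changes _ = 0"

lemma changes_append:
  "changes (xs @ ys) = changes xs + changes ys + (if xs \<noteq> [] \<and> ys \<noteq> [] \<and> last xs \<noteq> hd ys then 1 else 0)"
proof (induction xs rule: changes.induct)
  case ("2_2" a)
  then show ?case by (cases ys) auto
qed auto

lemma changes_le: "changes e \<le> length e - 1"
  by (induction e rule: changes.induct) auto

lemma changes_not: "changes (map Not e) = changes e"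
  by (induction e rule: changes.induct) auto

lemma changes_eq_sum: "changes e = (\<Sum>i<length e - 1. if e ! i \<noteq> e ! Suc i then 1 else 0)"
proof (induction e rule: changes.induct)
  case (1 a b xs)
  then show ?case by (simp add: sum.lessThan_Suc_shift del: sum.lessThan_Suc)
qed auto

lemma changes_splice:
  assumes "j < length e" and "m \<noteq> []"
  shows "changes (take j e @ m @ drop (Suc j) e) = changes (take j e) + changes m + changes (drop (Suc j) e)
    + (if 0 < j \<and> e ! (j - 1) \<noteq> hd m then 1 else 0)
    + (if Suc j < length e \<and> last m \<noteq> e ! Suc j then 1 else 0)"
proof -
  have "(take j e \<noteq> [] \<and> last (take j e) \<noteq> hd (m @ drop (Suc j) e)) \<longleftrightarrow> 0 < j \<and> e ! (j - 1) \<noteq> hd m"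
    using assms by (cases j) (auto simp: take_Suc_conv_app_nth)
  moreover have "(drop (Suc j) e \<noteq> [] \<and> last m \<noteq> hd (drop (Suc j) e)) \<longleftrightarrow> Suc j < length e \<and> last m \<noteq> e ! Suc j"
    by (auto simp: hd_drop_conv_nth)
  ultimately show ?thesis
    using assms(2) by (simp add: changes_append)
qed

definition split_peak :: "nat \<Rightarrow> bool list \<Rightarrow> bool list" where
  "split_peak j e = take j e @ [False, True] @ drop (Suc j) e"

definition split_valley :: "nat \<Rightarrow> bool list \<Rightarrow> bool list" where
  "split_valley j e = take j e @ [True, False] @ drop (Suc j) e"

text \<open>The words G is applied to are the descent words of the signed permutations obtained by
  inserting +-(n+1) into one with descent word e (lemma sum_signed_perms_Suc).\<close>

definition children_sum :: "(bool list \<Rightarrow> 'a::comm_monoid_add) \<Rightarrow> bool list \<Rightarrow> 'a" where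
  "children_sum G e =
     (\<Sum>j<length e. G (split_peak j e) + G (split_valley j e)) + G (e @ [False]) + G (e @ [True])"

definition neighbours :: "bool list \<Rightarrow> nat \<Rightarrow> nat" where
  "neighbours e j = (if 0 < j then 1 else 0) + (if Suc j < length e then 1 else 0)"

definition changed_neighbours :: "bool list \<Rightarrow> nat \<Rightarrow> nat" where
  "changed_neighbours e j = (if 0 < j \<and> e ! (j - 1) \<noteq> e ! j then 1 else 0)
     + (if Suc j < length e \<and> e ! j \<noteq> e ! Suc j then 1 else 0)"

lemma changed_neighbours_le: "changed_neighbours e j \<le> neighbours e j"
  by (simp add: neighbours_def changed_neighbours_def)

lemma neighbours_le: "neighbours e j \<le> 2"
  by (simp add: neighbours_def)

lemma changes_split_peak_valley:
  fixes f :: "nat \<Rightarrow> 'a::comm_ring_1"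
  assumes j: "j < length e"
  shows "f (changes (split_peak j e)) + f (changes (split_valley j e))
    = of_nat (neighbours e j - changed_neighbours e j) * f (changes e + 2)
      + of_nat (2 - neighbours e j) * f (changes e + 1) + of_nat (changed_neighbours e j) * f (changes e)"
proof -
  have "e = take j e @ [e ! j] @ drop (Suc j) e"
    using j by (simp add: id_take_nth_drop)
  then have "changes e = changes (take j e) + changes (drop (Suc j) e) + changed_neighbours e j"
    using changes_splice[OF j, of "[e ! j]"] unfolding changed_neighbours_def by simp
  moreover note changes_splice[OF j, of "[False, True]"] changes_splice[OF j, of "[True, False]"]
  ultimately show ?thesis
    unfolding split_peak_def split_valley_def neighbours_def changed_neighbours_def
    by (cases "0 < j"; cases "Suc j < length e"; cases "e ! (j - 1)"; cases "e ! j"; cases "e ! Suc j")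
      (simp_all add: algebra_simps)
qed

lemma sum_neighbours:
  assumes "e \<noteq> []"
  shows "(\<Sum>j<length e. neighbours e j) = 2 * length e - 2"
proof -
  obtain m where m: "length e = Suc m"
    using assms by (cases e) auto
  have "(\<Sum>j<Suc m. if 0 < j then 1 else 0 :: nat) = m"
    by (simp add: sum.lessThan_Suc_shift del: sum.lessThan_Suc)
  moreover have "(\<Sum>j<m. if j < m then 1 else 0 :: nat) = m"
    by simp
  ultimately show ?thesis
    by (simp add: neighbours_def m sum.distrib)
qed

lemma sum_left_changes:
  "(\<Sum>j<length e. if 0 < j \<and> e ! (j - 1) \<noteq> e ! j then 1 else 0) = changes e"
proof (cases e)
  case (Cons b e')
  then show ?thesis
    by (simp add: changes_eq_sum sum.lessThan_Suc_shift del: sum.lessThan_Suc)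
qed simp

lemma sum_changed_neighbours: "(\<Sum>j<length e. changed_neighbours e j) = 2 * changes e"
proof -
  have "(\<Sum>j<length e. if Suc j < length e \<and> e ! j \<noteq> e ! Suc j then 1 else 0) = changes e"
    by (cases e) (simp_all add: changes_eq_sum)
  then show ?thesis
    unfolding changed_neighbours_def sum.distrib sum_left_changes by simp
qed

lemma changes_children_sum:
  fixes f :: "nat \<Rightarrow> 'a::comm_ring_1"
  assumes "e \<noteq> []"
  defines "c \<equiv> changes e"
  shows "children_sum (\<lambda>u. f (changes u)) e
    = of_nat (2 * length e - 2 - 2 * c) * f (c + 2) + 3 * f (c + 1) + of_nat (2 * c + 1) * f c"
proof -
  define n where "n = length e"
  have "n \<ge> 1"
    using assms(1) by (simp add: n_def Suc_le_eq)
  have sums: "(\<Sum>j<n. neighbours e j - changed_neighbours e j) = 2 * n - 2 - 2 * c"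
    "(\<Sum>j<n. 2 - neighbours e j) = 2" "(\<Sum>j<n. changed_neighbours e j) = 2 * c"
    using sum_neighbours[OF assms(1)] sum_changed_neighbours[of e] \<open>n \<ge> 1\<close>
    by (simp_all add: n_def c_def sum_subtractf_nat changed_neighbours_le neighbours_le)
  have "(\<Sum>j<n. f (changes (split_peak j e)) + f (changes (split_valley j e)))
      = (\<Sum>j<n. of_nat (neighbours e j - changed_neighbours e j) * f (c + 2)
          + of_nat (2 - neighbours e j) * f (c + 1) + of_nat (changed_neighbours e j) * f c)"
    unfolding n_def c_def by (intro sum.cong refl changes_split_peak_valley) simp
  also have "\<dots> = of_nat (\<Sum>j<n. neighbours e j - changed_neighbours e j) * f (c + 2)
      + of_nat (\<Sum>j<n. 2 - neighbours e j) * f (c + 1) + of_nat (\<Sum>j<n. changed_neighbours e j) * f c"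
    by (simp add: sum.distrib sum_distrib_right)
  finally have "(\<Sum>j<n. f (changes (split_peak j e)) + f (changes (split_valley j e)))
      = of_nat (2 * n - 2 - 2 * c) * f (c + 2) + 2 * f (c + 1) + of_nat (2 * c) * f c"
    unfolding sums by simp
  moreover have "f (changes (e @ [False])) + f (changes (e @ [True])) = f (c + 1) + f c"
    using assms(1) by (cases "last e") (simp_all add: c_def changes_append)
  ultimately show ?thesis
    by (simp add: children_sum_def n_def algebra_simps)
qed

lemma sum_list_map_bool:
  fixes g :: "bool \<Rightarrow> 'a::comm_semiring_1"
  shows "sum_list (map g e) = of_nat (count_list e True) * g True + of_nat (count_list e False) * g False"
  by (induction e) (auto simp: algebra_simps)

lemma count_list_False: "count_list e False = length e - count_list e True"
  by (induction e) (auto simp: Suc_diff_le count_le_length)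

lemma count_children_sum:
  fixes f :: "nat \<Rightarrow> 'a::comm_ring_1" and e :: "bool list"
  defines "d \<equiv> count_list e True"
  shows "children_sum (\<lambda>u. f (count_list u True)) e
    = of_nat (2 * (length e - d) + 1) * f (d + 1) + of_nat (2 * d + 1) * f d"
proof -
  define g where "g b = 2 * f (if b then d else d + 1)" for b
  have "count_list (split_peak j e) True = (if e ! j then d else d + 1)"
    "count_list (split_valley j e) True = (if e ! j then d else d + 1)" if "j < length e" for j
  proof -
    have "d = count_list (take j e @ [e ! j] @ drop (Suc j) e) True"
      using that by (simp add: d_def id_take_nth_drop[symmetric])
    then show "count_list (split_peak j e) True = (if e ! j then d else d + 1)"
      "count_list (split_valley j e) True = (if e ! j then d else d + 1)"
      by (simp_all add: split_peak_def split_valley_def)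
  qed
  then have "(\<Sum>j<length e. f (count_list (split_peak j e) True) + f (count_list (split_valley j e) True))
      = (\<Sum>j<length e. g (e ! j))"
    unfolding g_def mult_2 by (intro sum.cong refl) simp
  also have "\<dots> = sum_list (map g e)"
    by (simp add: sum_list_sum_nth atLeast0LessThan)
  also have "\<dots> = of_nat d * g True + of_nat (length e - d) * g False"
    unfolding sum_list_map_bool count_list_False d_def ..
  finally have "(\<Sum>j<length e. f (count_list (split_peak j e) True) + f (count_list (split_valley j e) True))
      = of_nat d * g True + of_nat (length e - d) * g False" .
  moreover have "f (count_list (e @ [False]) True) + f (count_list (e @ [True]) True) = f d + f (d + 1)"
    by (simp add: d_def)
  ultimately show ?thesis
    unfolding children_sum_def g_def d_def[symmetric] of_nat_add of_nat_mult of_nat_numeral of_nat_1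
    by (simp add: algebra_simps)
qed

section \<open>Descent words of signed permutations\<close>

fun descents_from :: "int \<Rightarrow> int list \<Rightarrow> bool list" where
  "descents_from a [] = []"
| "descents_from a (x # xs) = (x < a) # descents_from x xs"

definition descent_word :: "int list \<Rightarrow> bool list" where
  "descent_word ps = descents_from 0 ps"

lemma length_descents_from [simp]: "length (descents_from a xs) = length xs"
  by (induction xs arbitrary: a) auto

lemma length_descent_word [simp]: "length (descent_word ps) = length ps"
  by (simp add: descent_word_def)

lemma nth_descents_from: "i < length xs \<Longrightarrow> descents_from a xs ! i = ((a # xs) ! Suc i < (a # xs) ! i)"
  by (induction xs arbitrary: a i) (auto simp: nth_Cons split: nat.split)

lemma descents_from_append: "descents_from a (xs @ ys) = descents_from a xs @ descents_from (last (a # xs)) ys"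
  by (induction xs arbitrary: a) auto

lemma descents_from_uminus:
  "distinct (a # xs) \<Longrightarrow> descents_from (- a) (map uminus xs) = map Not (descents_from a xs)"
  by (induction xs arbitrary: a) auto

lemma runB_eq_changes:
  assumes "distinct (0 # ps)"
  shows "runB ps = 1 + changes (descent_word ps)"
proof -
  define p where "p = 0 # ps"
  define e where "e = descent_word ps"
  define n where "n = length ps"
  have e_nth: "e ! i = (p ! Suc i < p ! i)" if "i < n" for i
    using that by (simp add: e_def descent_word_def p_def n_def nth_descents_from)
  have p_neq: "p ! i \<noteq> p ! j" if "i < j" "j \<le> n" for i j
    using nth_eq_iff_index_eq[OF assms, of i j] that by (simp add: p_def n_def)
  have turn: "(p!(i-1) < p!i \<and> p!i > p!(i+1)) \<or> (p!(i-1) > p!i \<and> p!i < p!(i+1))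
      \<longleftrightarrow> e ! (i - 1) \<noteq> e ! i" if "0 < i" "i < n" for i
  proof -
    have "p ! (i - 1) \<noteq> p ! i" "p ! i \<noteq> p ! Suc i"
      using that p_neq[of "i - 1" i] p_neq[of i "Suc i"] by auto
    moreover have "e ! (i - 1) = (p ! i < p ! (i - 1))" "e ! i = (p ! Suc i < p ! i)"
      using that e_nth[of "i - 1"] e_nth[of i] by auto
    ultimately show ?thesis
      by auto
  qed
  have "{i \<in> {1..n-1}. (p!(i-1) < p!i \<and> p!i > p!(i+1)) \<or> (p!(i-1) > p!i \<and> p!i < p!(i+1))}
      = {j. j < n \<and> (0 < j \<and> e ! (j - 1) \<noteq> e ! j)}"
  proof (rule Collect_cong)
    fix i
    show "i \<in> {1..n-1} \<and> ((p!(i-1) < p!i \<and> p!i > p!(i+1)) \<or> (p!(i-1) > p!i \<and> p!i < p!(i+1)))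
        \<longleftrightarrow> i < n \<and> (0 < i \<and> e ! (i - 1) \<noteq> e ! i)"
      using turn[of i] by (cases "0 < i \<and> i < n") auto
  qed
  also have "card \<dots> = (\<Sum>j<n. if 0 < j \<and> e ! (j - 1) \<noteq> e ! j then 1 else 0)"
    by (simp add: sum.If_cases Int_def)
  also have "\<dots> = changes e"
    using sum_left_changes[of e] by (simp add: e_def n_def)
  finally show ?thesis
    by (simp add: runB_def p_def e_def n_def)
qed

lemma desB_eq_count:
  assumes "ps \<noteq> []"
  shows "desB ps = count_list (descent_word ps) True"
proof -
  have "i \<in> {0..length ps - 1} \<longleftrightarrow> i < length ps" for i
    using assms by (cases ps) auto
  then have "{i \<in> {0..length ps - 1}. (0 # ps) ! i > (0 # ps) ! (i + 1)} = {i. i < length ps \<and> descent_word ps ! i}"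
    by (simp add: descent_word_def nth_descents_from cong: conj_cong)
  then show ?thesis
    by (simp add: desB_def count_list_eq_length_filter length_filter_conv_card)
qed

definition insert_at :: "nat \<Rightarrow> 'a \<Rightarrow> 'a list \<Rightarrow> 'a list" where
  "insert_at j v xs = take j xs @ v # drop j xs"

lemma length_insert_at: "j \<le> length xs \<Longrightarrow> length (insert_at j v xs) = Suc (length xs)"
  by (simp add: insert_at_def)

lemma map_insert_at: "map f (insert_at j v xs) = insert_at j (f v) (map f xs)"
  by (simp add: insert_at_def take_map drop_map)

lemma set_insert_at: "set (insert_at j v xs) = insert v (set xs)"
  using set_append[of "take j xs" "drop j xs"] by (auto simp: insert_at_def)

lemma distinct_insert_at: "distinct (insert_at j v xs) \<longleftrightarrow> v \<notin> set xs \<and> distinct xs"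
proof -
  have "distinct (ys @ v # zs) \<longleftrightarrow> distinct (v # ys @ zs)" for ys zs
    by auto
  from this[of "take j xs" "drop j xs"] show ?thesis
    unfolding insert_at_def append_take_drop_id distinct.simps(2) .
qed

lemma nth_insert_at_self: "j \<le> length xs \<Longrightarrow> insert_at j v xs ! j = v"
  by (simp add: insert_at_def nth_append)

lemma descent_word_insert_at:
  assumes "j < length ps"
  shows "descent_word (insert_at j v ps)
    = take j (descent_word ps) @ [v < last (0 # take j ps), ps ! j < v] @ drop (Suc j) (descent_word ps)"
proof -
  have d: "drop j ps = ps ! j # drop (Suc j) ps"
    using assms by (simp add: Cons_nth_drop_Suc)
  have "descent_word ps = descents_from 0 (take j ps @ drop j ps)"
    by (simp add: descent_word_def)
  also have "\<dots> = descents_from 0 (take j ps) @ (ps ! j < last (0 # take j ps)) # descents_from (ps ! j) (drop (Suc j) ps)"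
    unfolding descents_from_append d by simp
  finally have "descent_word ps = \<dots>" .
  moreover have "length (descents_from 0 (take j ps)) = j"
    using assms by simp
  ultimately show ?thesis
    by (simp add: descent_word_def insert_at_def descents_from_append d)
qed

lemma last_Cons_0_cases: "last (0 # xs) = 0 \<or> last (0 # xs) \<in> set xs"
  by (induction xs) auto

lemma descent_word_insert_max:
  assumes "j < length ps" "\<forall>y\<in>set ps. y < v" "0 < v"
  shows "descent_word (insert_at j v ps) = split_peak j (descent_word ps)"
proof -
  have "last (0 # take j ps) < v"
    using last_Cons_0_cases[of "take j ps"] assms(2,3) by (auto dest: in_set_takeD)
  moreover have "ps ! j < v"
    using assms by auto
  ultimately show ?thesis
    by (simp add: descent_word_insert_at[OF assms(1)] split_peak_def)
qed

lemma descent_word_insert_min: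
  assumes "j < length ps" "\<forall>y\<in>set ps. v < y" "v < 0"
  shows "descent_word (insert_at j v ps) = split_valley j (descent_word ps)"
proof -
  have "v < last (0 # take j ps)"
    using last_Cons_0_cases[of "take j ps"] assms(2,3) by (auto dest: in_set_takeD)
  moreover have "v < ps ! j"
    using assms by auto
  ultimately show ?thesis
    by (simp add: descent_word_insert_at[OF assms(1)] split_valley_def)
qed

lemma descent_word_snoc: "descent_word (ps @ [v]) = descent_word ps @ [v < last (0 # ps)]"
  by (simp add: descent_word_def descents_from_append)

section \<open>Inserting the largest letter\<close>

lemma signed_perms_length: "ps \<in> signed_perms n \<Longrightarrow> length ps = n"
  by (simp add: signed_perms_def)

lemma signed_perms_abs: "ps \<in> signed_perms n \<Longrightarrow> y \<in> set ps \<Longrightarrow> 1 \<le> \<bar>y\<bar> \<and> \<bar>y\<bar> \<le> int n"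
  by (force simp: signed_perms_def)

lemma signed_perms_distinct: "ps \<in> signed_perms n \<Longrightarrow> distinct (0 # ps)"
  using signed_perms_abs[of ps n 0] by (auto simp: signed_perms_def distinct_map)

lemma finite_signed_perms: "finite (signed_perms n)"
proof (rule finite_subset)
  show "signed_perms n \<subseteq> {xs. set xs \<subseteq> {-int n..int n} \<and> length xs = n}"
    using signed_perms_abs signed_perms_length by (fastforce simp: abs_le_iff)
qed (simp add: finite_lists_length_eq)

lemma signed_perms_0: "signed_perms 0 = {[]}"
  by (auto simp: signed_perms_def)

lemma uminus_signed_perms:
  assumes "ps \<in> signed_perms n"
  shows "map uminus ps \<in> signed_perms n"
proof -
  have "map abs (map uminus ps) = map abs ps"
    by simp
  with assms show ?thesis
    by (simp only: signed_perms_def mem_Collect_eq length_map)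
qed

lemma insert_at_signed_perms:
  assumes ps: "ps \<in> signed_perms n" and "j \<le> n" and s: "\<bar>s\<bar> = int (Suc n)"
  shows "insert_at j s ps \<in> signed_perms (Suc n)"
proof -
  have abs_ps: "distinct (map abs ps)" "set (map abs ps) = {1..int n}" "length ps = n"
    using ps by (auto simp: signed_perms_def)
  have "map abs (insert_at j s ps) = insert_at j (int (Suc n)) (map abs ps)"
    by (simp add: map_insert_at s)
  moreover have "{1..int (Suc n)} = insert (int (Suc n)) {1..int n}"
    by auto
  ultimately show ?thesis
    using abs_ps \<open>j \<le> n\<close> s
    by (simp add: signed_perms_def distinct_insert_at set_insert_at length_insert_at del: of_nat_Suc)
qed

lemma remove_nth_insert_at: "j \<le> length xs \<Longrightarrow> take j (insert_at j v xs) @ drop (Suc j) (insert_at j v xs) = xs"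
  by (simp add: insert_at_def)

lemma signed_perms_SucE:
  assumes q: "q \<in> signed_perms (Suc n)"
  obtains ps j s where "ps \<in> signed_perms n" "j \<le> n" "s \<in> {int (Suc n), - int (Suc n)}"
    "q = insert_at j s ps"
proof -
  have len: "length q = Suc n" and da: "distinct (map abs q)" and sa: "set (map abs q) = {1..int (Suc n)}"
    using q by (auto simp: signed_perms_def)
  moreover have "int (Suc n) \<in> set (map abs q)"
    using sa by simp
  then obtain k where "k < length (map abs q)" "map abs q ! k = int (Suc n)"
    unfolding in_set_conv_nth by blast
  ultimately have k: "k < Suc n" "\<bar>q ! k\<bar> = int (Suc n)"
    by simp_all
  define ps where "ps = take k q @ drop (Suc k) q"
  have "q ! k \<in> {int (Suc n), - int (Suc n)}"
    using k(2) by (auto simp: abs_if split: if_splits)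
  have q_eq: "q = insert_at k (q ! k) ps"
    using k len by (simp add: ps_def insert_at_def id_take_nth_drop[symmetric] min_def)
  have "map abs q = insert_at k (int (Suc n)) (map abs ps)"
    by (subst q_eq) (simp add: map_insert_at k)
  then have "distinct (map abs ps)" "int (Suc n) \<notin> set (map abs ps)"
    and "insert (int (Suc n)) (set (map abs ps)) = {1..int (Suc n)}"
    using da sa by (simp_all add: distinct_insert_at set_insert_at del: of_nat_Suc)
  then have "set (map abs ps) = {1..int (Suc n)} - {int (Suc n)}"
    by blast
  also have "\<dots> = {1..int n}"
    by auto
  finally have "set (map abs ps) = {1..int n}" .
  moreover have "length ps = n"
    using k len by (simp add: ps_def)
  ultimately have "ps \<in> signed_perms n"
    using \<open>distinct (map abs ps)\<close> by (simp add: signed_perms_def)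
  from that[OF this _ \<open>q ! k \<in> {int (Suc n), - int (Suc n)}\<close> q_eq] k(1) show ?thesis
    by simp
qed

lemma bij_betw_insert_at_signed_perms:
  "bij_betw (\<lambda>(ps, j, s). insert_at j s ps)
    (signed_perms n \<times> {..n} \<times> {int (Suc n), - int (Suc n)}) (signed_perms (Suc n))"
proof (rule bij_betwI')
  fix x y
  assume "x \<in> signed_perms n \<times> {..n} \<times> {int (Suc n), - int (Suc n)}"
    and "y \<in> signed_perms n \<times> {..n} \<times> {int (Suc n), - int (Suc n)}"
  then obtain ps j s ps' j' s' where x: "x = (ps, j, s)" and y: "y = (ps', j', s')"
    and ps: "ps \<in> signed_perms n" "j \<le> n" "\<bar>s\<bar> = int (Suc n)"
    and ps': "ps' \<in> signed_perms n" "j' \<le> n" "\<bar>s'\<bar> = int (Suc n)"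
    by auto
  show "((\<lambda>(ps, j, s). insert_at j s ps) x = (\<lambda>(ps, j, s). insert_at j s ps) y) = (x = y)"
  proof
    assume "(\<lambda>(ps, j, s). insert_at j s ps) x = (\<lambda>(ps, j, s). insert_at j s ps) y"
    then have q: "insert_at j s ps = insert_at j' s' ps'"
      by (simp add: x y)
    have len: "length ps = n" "length ps' = n"
      using ps ps' by (simp_all add: signed_perms_length)
    have "distinct (map abs (insert_at j s ps))"
      using insert_at_signed_perms[OF ps] by (simp add: signed_perms_def)
    moreover have nth_j: "insert_at j s ps ! j = s"
      using ps len by (simp add: nth_insert_at_self)
    moreover have nth_j': "insert_at j s ps ! j' = s'"
      using ps' len by (simp add: q nth_insert_at_self)
    ultimately have "j = j'"
      using ps ps' len nth_eq_iff_index_eq[of "map abs (insert_at j s ps)" j j']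
      by (simp add: length_insert_at)
    moreover have "ps = ps'"
      using q remove_nth_insert_at[of j ps s] remove_nth_insert_at[of j' ps' s'] len ps ps' \<open>j = j'\<close>
      by simp
    ultimately show "x = y"
      using nth_j nth_j' by (simp add: x y)
  qed simp
next
  fix x assume "x \<in> signed_perms n \<times> {..n} \<times> {int (Suc n), - int (Suc n)}"
  then show "(\<lambda>(ps, j, s). insert_at j s ps) x \<in> signed_perms (Suc n)"
    by (auto intro: insert_at_signed_perms)
next
  fix q assume "q \<in> signed_perms (Suc n)"
  then obtain ps j s where "ps \<in> signed_perms n" "j \<le> n" "s \<in> {int (Suc n), - int (Suc n)}"
    "q = insert_at j s ps"
    by (rule signed_perms_SucE)
  then show "\<exists>x \<in> signed_perms n \<times> {..n} \<times> {int (Suc n), - int (Suc n)}.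
      q = (\<lambda>(ps, j, s). insert_at j s ps) x"
    by auto
qed

lemma sum_signed_perms_Suc:
  fixes G :: "bool list \<Rightarrow> 'a::comm_monoid_add"
  shows "(\<Sum>q\<in>signed_perms (Suc n). G (descent_word q))
    = (\<Sum>ps\<in>signed_perms n. children_sum G (descent_word ps))"
proof -
  define M where "M = int (Suc n)"
  have "(\<Sum>q\<in>signed_perms (Suc n). G (descent_word q))
      = (\<Sum>(ps, j, s)\<in>signed_perms n \<times> {..n} \<times> {M, -M}. G (descent_word (insert_at j s ps)))"
    using sum.reindex_bij_betw[OF bij_betw_insert_at_signed_perms, of "\<lambda>q. G (descent_word q)" n]
    by (simp add: M_def case_prod_unfold)
  also have "\<dots> = (\<Sum>ps\<in>signed_perms n. \<Sum>j\<le>n. G (descent_word (insert_at j M ps)) + G (descent_word (insert_at j (-M) ps)))"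
    by (simp add: sum.cartesian_product[symmetric] M_def)
  also have "\<dots> = (\<Sum>ps\<in>signed_perms n. children_sum G (descent_word ps))"
  proof (rule sum.cong[OF refl])
    fix ps assume ps: "ps \<in> signed_perms n"
    have len: "length ps = n"
      using ps by (rule signed_perms_length)
    have "- M < y \<and> y < M" if "y \<in> set ps" for y
      using signed_perms_abs[OF ps that] by (simp add: M_def abs_le_iff)
    then have bounds: "\<forall>y\<in>set ps. y < M" "\<forall>y\<in>set ps. - M < y"
      by simp_all
    have "last (0 # ps) < M" "- M < last (0 # ps)"
      using last_Cons_0_cases[of ps] bounds by (auto simp: M_def)
    then have "descent_word (insert_at n M ps) = descent_word ps @ [False]"
      "descent_word (insert_at n (-M) ps) = descent_word ps @ [True]"
      using len by (auto simp: insert_at_def descent_word_snoc)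
    moreover have "0 < M"
      by (simp add: M_def)
    ultimately show "(\<Sum>j\<le>n. G (descent_word (insert_at j M ps)) + G (descent_word (insert_at j (-M) ps)))
        = children_sum G (descent_word ps)"
      using len bounds
      by (simp add: children_sum_def lessThan_Suc_atMost[symmetric] add.assoc
          descent_word_insert_max descent_word_insert_min)
  qed
  finally show ?thesis .
qed

lemma runB_uminus:
  assumes "ps \<in> signed_perms n"
  shows "runB (map uminus ps) = runB ps"
proof -
  have "descent_word (map uminus ps) = map Not (descent_word ps)"
    using descents_from_uminus[OF signed_perms_distinct[OF assms]] by (simp add: descent_word_def)
  then show ?thesis
    using signed_perms_distinct[OF assms] signed_perms_distinct[OF uminus_signed_perms[OF assms]]
    by (simp add: runB_eq_changes changes_not)
qed

lemma sum_signed_perms_runB: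
  fixes x :: "'a::comm_semiring_1"
  assumes "n \<ge> 1"
  shows "(\<Sum>ps\<in>signed_perms n. x ^ runB ps) = 2 * R_B_pos n x"
proof -
  define pos where "pos ps = (if 0 < ps ! 0 then x ^ runB ps else 0)" for ps :: "int list"
  have first_nonzero: "ps ! 0 \<noteq> 0" if "ps \<in> signed_perms n" for ps
    using that assms signed_perms_abs[OF that, of "ps ! 0"] by (auto simp: signed_perms_length)
  have "bij_betw (map uminus) (signed_perms n) (signed_perms n)"
    by (rule bij_betw_byWitness[where f' = "map uminus"]) (auto intro: uminus_signed_perms)
  then have "(\<Sum>ps\<in>signed_perms n. pos ps) = (\<Sum>ps\<in>signed_perms n. pos (map uminus ps))"
    by (rule sum.reindex_bij_betw[symmetric])
  also have "\<dots> = (\<Sum>ps\<in>signed_perms n. if ps ! 0 < 0 then x ^ runB ps else 0)"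
    using assms by (intro sum.cong refl) (simp add: pos_def runB_uminus signed_perms_length)
  finally have neg: "(\<Sum>ps\<in>signed_perms n. pos ps) = \<dots>" .
  have "(\<Sum>ps\<in>signed_perms n. x ^ runB ps)
      = (\<Sum>ps\<in>signed_perms n. pos ps) + (\<Sum>ps\<in>signed_perms n. if ps ! 0 < 0 then x ^ runB ps else 0)"
    unfolding pos_def sum.distrib[symmetric] using first_nonzero by (intro sum.cong refl) auto
  then show ?thesis
    unfolding neg[symmetric]
    using finite_signed_perms by (simp add: R_B_pos_def pos_def sum.inter_filter mult_2)
qed

section \<open>The recurrence for the two generating functions\<close>

definition recurrence_step :: "nat \<Rightarrow> 'a::real_normed_field \<Rightarrow> 'a \<Rightarrow> 'a \<Rightarrow> 'a" where
  "recurrence_step n w F F' = ((2 * of_nat n + 3) * (1 - w\<^sup>2) - (1 + w\<^sup>2)) * F - 2 * w * (1 - w\<^sup>2) * F'"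

definition run_term :: "nat \<Rightarrow> nat \<Rightarrow> 'a::real_normed_field \<Rightarrow> 'a" where
  "run_term n c w = (1 - w\<^sup>2) ^ Suc c * (1 + w\<^sup>2) ^ (n - 1 - c)"

definition run_term_deriv :: "nat \<Rightarrow> nat \<Rightarrow> 'a::real_normed_field \<Rightarrow> 'a" where
  "run_term_deriv n c w = 2 * w * (1 - w\<^sup>2) ^ c
     * (of_nat (n - 1 - c) * (1 - w\<^sup>2) * (1 + w\<^sup>2) ^ (n - 2 - c) - of_nat (Suc c) * (1 + w\<^sup>2) ^ (n - 1 - c))"

definition des_term :: "nat \<Rightarrow> nat \<Rightarrow> 'a::real_normed_field \<Rightarrow> 'a" where
  "des_term n d w = (1 - w\<^sup>2) * (1 - w) ^ d * (1 + w) ^ (n - d)"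

definition des_term_deriv :: "nat \<Rightarrow> nat \<Rightarrow> 'a::real_normed_field \<Rightarrow> 'a" where
  "des_term_deriv n d w = (of_nat (n - d) * (1 - w) - of_nat d * (1 + w) - 2 * w) * (1 - w) ^ d * (1 + w) ^ (n - d)"

lemma power_pred_mult: "of_nat k * x ^ (k - 1) * x = of_nat k * (x ^ k :: 'a::comm_semiring_1)"
  by (cases k) (simp_all add: algebra_simps)

lemma has_field_derivative_run_term: "(run_term n c has_field_derivative run_term_deriv n c w) (at w)"
proof -
  define m where "m = n - 1 - c"
  have "((\<lambda>w. (1 - w\<^sup>2) ^ Suc c * (1 + w\<^sup>2) ^ m) has_field_derivative
      of_nat (Suc c) * (1 - w\<^sup>2) ^ c * (- 2 * w) * (1 + w\<^sup>2) ^ m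
      + (1 - w\<^sup>2) ^ Suc c * (of_nat m * (1 + w\<^sup>2) ^ (m - 1) * (2 * w))) (at w)"
    by (rule derivative_eq_intros refl | simp)+
  moreover have "of_nat (Suc c) * (1 - w\<^sup>2) ^ c * (- 2 * w) * (1 + w\<^sup>2) ^ m
      + (1 - w\<^sup>2) ^ Suc c * (of_nat m * (1 + w\<^sup>2) ^ (m - 1) * (2 * w)) = run_term_deriv n c w"
  proof -
    have "n - 2 - c = m - 1"
      by (simp add: m_def)
    then show ?thesis
      unfolding run_term_deriv_def m_def [symmetric] by (simp add: algebra_simps)
  qed
  ultimately show ?thesis
    unfolding run_term_def [abs_def] m_def [symmetric] by (rule DERIV_cong)
qed

lemma has_field_derivative_des_term: "(des_term n d has_field_derivative des_term_deriv n d w) (at w)"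
proof -
  define k where "k = n - d"
  have "((\<lambda>w. (1 - w\<^sup>2) * (1 - w) ^ d * (1 + w) ^ k) has_field_derivative
      (- 2 * w) * (1 - w) ^ d * (1 + w) ^ k
      - (1 - w\<^sup>2) * (of_nat d * (1 - w) ^ (d - 1)) * (1 + w) ^ k
      + (1 - w\<^sup>2) * (1 - w) ^ d * (of_nat k * (1 + w) ^ (k - 1))) (at w)"
    by ((rule derivative_eq_intros refl | simp)+) (simp add: algebra_simps)
  moreover have "(- 2 * w) * (1 - w) ^ d * (1 + w) ^ k
      - (1 - w\<^sup>2) * (of_nat d * (1 - w) ^ (d - 1)) * (1 + w) ^ k
      + (1 - w\<^sup>2) * (1 - w) ^ d * (of_nat k * (1 + w) ^ (k - 1)) = des_term_deriv n d w"
    unfolding des_term_deriv_def k_def [symmetric]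
    by (cases d; cases k) (simp_all add: algebra_simps power2_eq_square)
  ultimately show ?thesis
    unfolding des_term_def [abs_def] k_def [symmetric] by (rule DERIV_cong)
qed

text \<open>V' stands for (1 + w^2)^(m - 1); the hypothesis replaces V' * (1 + w^2) = V, which
  fails for m = 0 because of truncated subtraction.\<close>

lemma run_term_children_identity:
  fixes w U V V' M C :: "'a::comm_ring_1"
  assumes "M * V' * (1 + w\<^sup>2) = M * V"
  shows "2 * M * ((1 - w\<^sup>2) ^ 3 * U * V') + 3 * ((1 - w\<^sup>2)\<^sup>2 * U * V)
      + (2 * C + 1) * ((1 - w\<^sup>2) * U * ((1 + w\<^sup>2) * V))
    = ((2 * (C + M + 1) + 3) * (1 - w\<^sup>2) - (1 + w\<^sup>2)) * ((1 - w\<^sup>2) * U * V)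
      - 2 * w * (1 - w\<^sup>2) * (2 * w * U * (M * (1 - w\<^sup>2) * V' - (C + 1) * V))"
proof -
  have "2 * M * ((1 - w\<^sup>2) ^ 3 * U * V') + 3 * ((1 - w\<^sup>2)\<^sup>2 * U * V)
      + (2 * C + 1) * ((1 - w\<^sup>2) * U * ((1 + w\<^sup>2) * V))
    - (((2 * (C + M + 1) + 3) * (1 - w\<^sup>2) - (1 + w\<^sup>2)) * ((1 - w\<^sup>2) * U * V)
      - 2 * w * (1 - w\<^sup>2) * (2 * w * U * (M * (1 - w\<^sup>2) * V' - (C + 1) * V)))
    = 2 * (1 - w\<^sup>2)\<^sup>2 * U * (M * V' * (1 + w\<^sup>2) - M * V)"
    by (simp add: algebra_simps power2_eq_square power3_eq_cube)
  with assms show ?thesis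
    by simp
qed

lemma run_term_children:
  assumes "c < n"
  shows "of_nat (2 * n - 2 - 2 * c) * run_term (Suc n) (c + 2) w + 3 * run_term (Suc n) (c + 1) w
      + of_nat (2 * c + 1) * run_term (Suc n) c w
    = recurrence_step n w (run_term n c w) (run_term_deriv n c w)"
proof -
  define m where "m = n - 1 - c"
  have n: "n = c + m + 1"
    using assms by (simp add: m_def)
  have "run_term (Suc n) (c + 2) w = (1 - w\<^sup>2) ^ 3 * (1 - w\<^sup>2) ^ c * (1 + w\<^sup>2) ^ (m - 1)"
    "run_term (Suc n) (c + 1) w = (1 - w\<^sup>2)\<^sup>2 * (1 - w\<^sup>2) ^ c * (1 + w\<^sup>2) ^ m"
    "run_term (Suc n) c w = (1 - w\<^sup>2) * (1 - w\<^sup>2) ^ c * ((1 + w\<^sup>2) * (1 + w\<^sup>2) ^ m)"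
    "run_term n c w = (1 - w\<^sup>2) * (1 - w\<^sup>2) ^ c * (1 + w\<^sup>2) ^ m"
    "run_term_deriv n c w = 2 * w * (1 - w\<^sup>2) ^ c
       * (of_nat m * (1 - w\<^sup>2) * (1 + w\<^sup>2) ^ (m - 1) - (of_nat c + 1) * (1 + w\<^sup>2) ^ m)"
    by (simp_all add: run_term_def run_term_deriv_def n power_add [symmetric] numeral_eq_Suc add.commute)
  moreover have "of_nat (2 * n - 2 - 2 * c) = 2 * (of_nat m :: 'a)" "of_nat n = of_nat c + of_nat m + (1 :: 'a)"
    "of_nat (2 * c + 1) = 2 * of_nat c + (1 :: 'a)"
    by (simp_all add: n)
  moreover have pred: "of_nat m * (1 + w\<^sup>2) ^ (m - 1) * (1 + w\<^sup>2) = of_nat m * (1 + w\<^sup>2) ^ m"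
    by (rule power_pred_mult)
  ultimately show ?thesis
    using run_term_children_identity[OF pred, where U = "(1 - w\<^sup>2) ^ c" and C = "of_nat c"]
    unfolding recurrence_step_def by (simp only:)
qed

lemma des_term_children_identity:
  fixes w A B D K :: "'a::comm_ring_1"
  shows "(2 * K + 1) * ((1 - w\<^sup>2) * ((1 - w) * A) * B) + (2 * D + 1) * ((1 - w\<^sup>2) * A * ((1 + w) * B))
    = ((2 * (D + K) + 3) * (1 - w\<^sup>2) - (1 + w\<^sup>2)) * ((1 - w\<^sup>2) * A * B)
      - 2 * w * (1 - w\<^sup>2) * ((K * (1 - w) - D * (1 + w) - 2 * w) * A * B)"
  by (simp add: algebra_simps power2_eq_square)

lemma des_term_children:
  assumes "d \<le> n"
  shows "of_nat (2 * (n - d) + 1) * des_term (Suc n) (d + 1) w + of_nat (2 * d + 1) * des_term (Suc n) d w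
    = recurrence_step n w (des_term n d w) (des_term_deriv n d w)"
proof -
  define k where "k = n - d"
  have exps: "Suc n - (d + 1) = k" "Suc n - d = Suc k" "n - d = k" "n = d + k"
    using assms by (simp_all add: k_def)
  have "des_term (Suc n) (d + 1) w = (1 - w\<^sup>2) * ((1 - w) * (1 - w) ^ d) * (1 + w) ^ k"
    "des_term (Suc n) d w = (1 - w\<^sup>2) * (1 - w) ^ d * ((1 + w) * (1 + w) ^ k)"
    "des_term n d w = (1 - w\<^sup>2) * (1 - w) ^ d * (1 + w) ^ k"
    "des_term_deriv n d w = (of_nat k * (1 - w) - of_nat d * (1 + w) - 2 * w) * (1 - w) ^ d * (1 + w) ^ k"
    "of_nat (2 * (n - d) + 1) = 2 * of_nat k + (1 :: 'a)" "of_nat (2 * d + 1) = 2 * of_nat d + (1 :: 'a)"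
    by (simp_all add: des_term_def des_term_deriv_def exps(1-3))
  moreover have "of_nat n = of_nat d + (of_nat k :: 'a)"
    using exps(4) by simp
  ultimately show ?thesis
    using des_term_children_identity[where A = "(1 - w) ^ d" and D = "of_nat d"]
    unfolding recurrence_step_def by (simp only:)
qed

definition run_poly :: "nat \<Rightarrow> 'a::real_normed_field \<Rightarrow> 'a" where
  "run_poly n w = (\<Sum>ps\<in>signed_perms n. run_term n (changes (descent_word ps)) w)"

definition des_poly :: "nat \<Rightarrow> 'a::real_normed_field \<Rightarrow> 'a" where
  "des_poly n w = (\<Sum>ps\<in>signed_perms n. des_term n (count_list (descent_word ps) True) w)"

lemma sum_recurrence_step:
  "(\<Sum>i\<in>A. recurrence_step n w (F i) (F' i)) = recurrence_step n w (sum F A) (sum F' A)"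
  by (simp add: recurrence_step_def sum_subtractf sum_distrib_left)

lemma deriv_run_poly:
  "deriv (run_poly n) w = (\<Sum>ps\<in>signed_perms n. run_term_deriv n (changes (descent_word ps)) w)"
  unfolding run_poly_def [abs_def] by (intro DERIV_imp_deriv DERIV_sum has_field_derivative_run_term)

lemma deriv_des_poly:
  "deriv (des_poly n) w = (\<Sum>ps\<in>signed_perms n. des_term_deriv n (count_list (descent_word ps) True) w)"
  unfolding des_poly_def [abs_def] by (intro DERIV_imp_deriv DERIV_sum has_field_derivative_des_term)

lemma run_poly_Suc:
  assumes "n \<ge> 1"
  shows "run_poly (Suc n) w = recurrence_step n w (run_poly n w) (deriv (run_poly n) w)"
proof -
  have "run_poly (Suc n) w
      = (\<Sum>ps\<in>signed_perms n. children_sum (\<lambda>e. run_term (Suc n) (changes e) w) (descent_word ps))"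
    unfolding run_poly_def by (rule sum_signed_perms_Suc)
  also have "\<dots> = (\<Sum>ps\<in>signed_perms n. recurrence_step n w
      (run_term n (changes (descent_word ps)) w) (run_term_deriv n (changes (descent_word ps)) w))"
  proof (rule sum.cong [OF refl])
    fix ps assume "ps \<in> signed_perms n"
    then have "length (descent_word ps) = n"
      by (simp add: signed_perms_length)
    moreover from this have "descent_word ps \<noteq> []" "changes (descent_word ps) < n"
      using assms changes_le [of "descent_word ps"] by (auto simp flip: length_0_conv)
    ultimately show "children_sum (\<lambda>e. run_term (Suc n) (changes e) w) (descent_word ps)
        = recurrence_step n w (run_term n (changes (descent_word ps)) w) (run_term_deriv n (changes (descent_word ps)) w)"
      using changes_children_sum [of "descent_word ps" "\<lambda>c. run_term (Suc n) c w"]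
        run_term_children [of "changes (descent_word ps)" n w]
      by simp
  qed
  also have "\<dots> = recurrence_step n w (run_poly n w) (deriv (run_poly n) w)"
    by (simp add: sum_recurrence_step run_poly_def deriv_run_poly)
  finally show ?thesis .
qed

lemma des_poly_Suc: "des_poly (Suc n) w = recurrence_step n w (des_poly n w) (deriv (des_poly n) w)"
proof -
  have "des_poly (Suc n) w
      = (\<Sum>ps\<in>signed_perms n. children_sum (\<lambda>e. des_term (Suc n) (count_list e True) w) (descent_word ps))"
    unfolding des_poly_def by (rule sum_signed_perms_Suc)
  also have "\<dots> = (\<Sum>ps\<in>signed_perms n. recurrence_step n w
      (des_term n (count_list (descent_word ps) True) w) (des_term_deriv n (count_list (descent_word ps) True) w))"
  proof (rule sum.cong [OF refl])
    fix ps assume "ps \<in> signed_perms n"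
    then have "length (descent_word ps) = n"
      by (simp add: signed_perms_length)
    moreover from this have "count_list (descent_word ps) True \<le> n"
      using count_le_length by metis
    ultimately show "children_sum (\<lambda>e. des_term (Suc n) (count_list e True) w) (descent_word ps)
        = recurrence_step n w (des_term n (count_list (descent_word ps) True) w)
            (des_term_deriv n (count_list (descent_word ps) True) w)"
      using count_children_sum [of "\<lambda>d. des_term (Suc n) d w" "descent_word ps"]
        des_term_children [of "count_list (descent_word ps) True" n w]
      by simp
  qed
  also have "\<dots> = recurrence_step n w (des_poly n w) (deriv (des_poly n) w)"
    by (simp add: sum_recurrence_step des_poly_def deriv_des_poly)
  finally show ?thesis .
qed

lemma run_poly_eq_des_poly:
  assumes "n \<ge> 1"
  shows "run_poly n = des_poly n"
  using assms
proof (induction n rule: nat_induct_at_least)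
  case base
  have "run_poly 1 w = 2 * (1 - w\<^sup>2)" "des_poly 1 w = 2 * (1 - w\<^sup>2)" for w :: 'a
    using sum_signed_perms_Suc [of "\<lambda>e. run_term 1 (changes e) w" 0]
      sum_signed_perms_Suc [of "\<lambda>e. des_term 1 (count_list e True) w" 0]
    by (simp_all add: run_poly_def des_poly_def signed_perms_0 descent_word_def children_sum_def
        run_term_def des_term_def algebra_simps)
  then show ?case
    by (simp add: fun_eq_iff)
next
  case (Suc n)
  show ?case
  proof
    fix w :: 'a
    show "run_poly (Suc n) w = des_poly (Suc n) w"
      using Suc by (simp add: run_poly_Suc des_poly_Suc)
  qed
qed

lemma sum_runB_eq_run_poly:
  fixes w :: "'a::real_normed_field"
  assumes "n \<ge> 1" and "1 + w\<^sup>2 \<noteq> 0"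
  shows "(\<Sum>ps\<in>signed_perms n. ((1 - w\<^sup>2) / (1 + w\<^sup>2)) ^ runB ps) = run_poly n w / (1 + w\<^sup>2) ^ n"
proof -
  have "((1 - w\<^sup>2) / (1 + w\<^sup>2)) ^ runB ps = run_term n (changes (descent_word ps)) w / (1 + w\<^sup>2) ^ n"
    if ps: "ps \<in> signed_perms n" for ps
  proof -
    define c where "c = changes (descent_word ps)"
    have "c \<le> n - 1"
      using changes_le [of "descent_word ps"] ps by (simp add: c_def signed_perms_length)
    then have n: "n = Suc c + (n - 1 - c)"
      using assms(1) by simp
    have "((1 - w\<^sup>2) / (1 + w\<^sup>2)) ^ runB ps = (1 - w\<^sup>2) ^ Suc c / (1 + w\<^sup>2) ^ Suc c"
      using signed_perms_distinct [OF ps] by (simp add: runB_eq_changes c_def power_divide)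
    also have "\<dots> = run_term n c w / (1 + w\<^sup>2) ^ n"
      using assms(2) by (subst (2) n) (simp add: run_term_def power_add)
    finally show ?thesis
      by (simp add: c_def)
  qed
  then show ?thesis
    by (simp add: run_poly_def sum_divide_distrib)
qed

lemma des_poly_eq_eulerB:
  fixes w :: "'a::real_normed_field"
  assumes "n \<ge> 1" and "1 + w \<noteq> 0"
  shows "des_poly n w = (1 - w\<^sup>2) * (1 + w) ^ n * eulerB n ((1 - w) / (1 + w))"
proof -
  have "des_term n (count_list (descent_word ps) True) w = (1 - w\<^sup>2) * ((1 + w) ^ n * ((1 - w) / (1 + w)) ^ desB ps)"
    if ps: "ps \<in> signed_perms n" for ps
  proof -
    define d where "d = count_list (descent_word ps) True"
    have "length ps = n"
      using ps by (rule signed_perms_length)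
    then have "ps \<noteq> []" "d \<le> n"
      using assms(1) count_le_length [of "descent_word ps" True] by (auto simp: d_def)
    have "(1 + w) ^ n = (1 + w) ^ d * (1 + w) ^ (n - d)"
      using \<open>d \<le> n\<close> by (simp flip: power_add)
    then have "(1 + w) ^ n * ((1 - w) / (1 + w)) ^ d = (1 - w) ^ d * (1 + w) ^ (n - d)"
      using assms(2) by (simp add: power_divide)
    moreover have "desB ps = d"
      using \<open>ps \<noteq> []\<close> by (simp add: desB_eq_count d_def)
    ultimately show ?thesis
      by (simp add: des_term_def d_def mult.assoc)
  qed
  then show ?thesis
    by (simp add: des_poly_def eulerB_def sum_distrib_left mult.assoc)
qed

lemma half_power_substitution:
  fixes x w :: "'a::field_char_0"
  assumes "n \<ge> 1" and "1 + w\<^sup>2 \<noteq> 0" and "x = (1 - w\<^sup>2) / (1 + w\<^sup>2)"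
  shows "2 * (x / 2 * ((1 + x) / 2) ^ (n - 1) * E * F) = (1 - w\<^sup>2) * E * F / (1 + w\<^sup>2) ^ n"
proof -
  have half: "(1 + x) / 2 = 1 / (1 + w\<^sup>2)"
    using assms(2,3) by (simp add: field_simps)
  have pow: "((1 + x) / 2) ^ (n - 1) = (1 + w\<^sup>2) / (1 + w\<^sup>2) ^ n"
    unfolding half using assms(1,2) by (cases n) (simp_all add: power_one_over)
  have "2 * (a / v / 2 * (v / v ^ n) * E * F) = a * E * F / v ^ n" if "v \<noteq> 0" for a v :: 'a
    using that by (simp add: field_simps)
  from this [OF assms(2)] show ?thesis
    unfolding pow by (simp only: assms(3))
qed

theorem mainTheorem16:
  fixes n :: nat and x w :: complex
  assumes "n \<ge> 1"
    and "x \<noteq> -1"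
    and "w\<^sup>2 = (1 - x) / (1 + x)"
    and "w \<noteq> -1"
  shows "R_B_pos n x
    = x / 2 * ((1 + x) / 2) ^ (n - 1) * (1 + w) ^ n * eulerB n ((1 - w) / (1 + w))"
proof -
  have "1 + x \<noteq> 0" "1 + w \<noteq> 0"
    using assms(2,4) by (auto simp: add_eq_0_iff)
  then have v: "1 + w\<^sup>2 = 2 / (1 + x)"
    using assms(3) by (simp add: field_simps)
  then have "1 + w\<^sup>2 \<noteq> 0"
    using \<open>1 + x \<noteq> 0\<close> by simp
  have x: "x = (1 - w\<^sup>2) / (1 + w\<^sup>2)"
    using v \<open>1 + x \<noteq> 0\<close> \<open>1 + w\<^sup>2 \<noteq> 0\<close> by (simp add: field_simps)
  have "2 * R_B_pos n x = (\<Sum>ps\<in>signed_perms n. x ^ runB ps)"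
    by (rule sum_signed_perms_runB [OF assms(1), symmetric])
  also have "\<dots> = run_poly n w / (1 + w\<^sup>2) ^ n"
    unfolding x by (rule sum_runB_eq_run_poly [OF assms(1) \<open>1 + w\<^sup>2 \<noteq> 0\<close>])
  also have "\<dots> = (1 - w\<^sup>2) * (1 + w) ^ n * eulerB n ((1 - w) / (1 + w)) / (1 + w\<^sup>2) ^ n"
    by (simp add: run_poly_eq_des_poly [OF assms(1)] des_poly_eq_eulerB [OF assms(1) \<open>1 + w \<noteq> 0\<close>])
  also have "\<dots> = 2 * (x / 2 * ((1 + x) / 2) ^ (n - 1) * (1 + w) ^ n * eulerB n ((1 - w) / (1 + w)))"
    by (rule half_power_substitution [OF assms(1) \<open>1 + w\<^sup>2 \<noteq> 0\<close> x, symmetric])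
  finally show ?thesis
    by (simp only: mult_cancel_left) simp
qed

end
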